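(* Let $n\ge 8$ be an even integer and let $W_{3,n}$ be the $3$-regular Kn\"odel graph. Then $W_{3,n}$ is $\gamma$-critical if and only if $n\equiv 4 \pmod 8$.
   Context: For an even integer $n\ge 2$ and $1\le\Delta\le\lfloor\log_2 n\rfloor$, the Kn\"odel graph $W_{\Delta,n}$ is the $\Delta$-regular bipartite graph on the $n$ vertices $(i,j)$, $i\in\{1,2\}$, $0\le j\le n/2-1$, in which for every $j$ the vertex $(1,j)$ is adjacent to the vertices $(2,(j+2^k-1)\bmod (n/2))$ for $k=0,1,\dots,\Delta-1$ (and there are no other edges); in particular $W_{3,n}$ is defined for even $n\ge 8$. A set $D$ of vertices of a graph $G$ is dominating if every vertex not in $D$ is adjacent to a vertex of $D$; $\gamma(G)$ is the minimum size of a dominating set. A graph $G$ is $\gamma$-critical (domination vertex critical) if $\gamma(G-u)<\gamma(G)$ for every vertex $u$ of $G$, where $G-u$ is the graph obtained by deleting $u$. *)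

theory Defs
  imports Main
begin

text \<open>A (simple, undirected) graph is given by a finite vertex set V and a
symmetric adjacency relation adj; only adjacencies between vertices of V matter.\<close>

definition dominating :: "'a set \<Rightarrow> ('a \<Rightarrow> 'a \<Rightarrow> bool) \<Rightarrow> 'a set \<Rightarrow> bool" where
  "dominating V adj D \<longleftrightarrow> D \<subseteq> V \<and> (\<forall>v \<in> V - D. \<exists>d \<in> D. adj v d)"

definition domination_number :: "'a set \<Rightarrow> ('a \<Rightarrow> 'a \<Rightarrow> bool) \<Rightarrow> nat" where
  "domination_number V adj = Min (card ` {D. dominating V adj D})"

definition gamma_critical :: "'a set \<Rightarrow> ('a \<Rightarrow> 'a \<Rightarrow> bool) \<Rightarrow> bool" where
  "gamma_critical V adj \<longleftrightarrow>
     (\<forall>u \<in> V. domination_number (V - {u}) adj < domination_number V adj)"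

definition knoedel_vertices :: "nat \<Rightarrow> (nat \<times> nat) set" where
  "knoedel_vertices n = {1,2} \<times> {0..<n div 2}"

definition knoedel_adj :: "nat \<Rightarrow> nat \<Rightarrow> nat \<times> nat \<Rightarrow> nat \<times> nat \<Rightarrow> bool" where
  "knoedel_adj \<Delta> n x y \<longleftrightarrow>
     (\<exists>j l. \<exists>k < \<Delta>. j < n div 2 \<and> l = (j + 2^k - 1) mod (n div 2) \<and>
        ((x = (1,j) \<and> y = (2,l)) \<or> (x = (2,l) \<and> y = (1,j))))"

end

theory Submission
  imports Defs "HOL-Number_Theory.Cong"
begin

text \<open>
  Write m = n/2. Every vertex of W_{3,n} dominates itself and at most three vertices of the
  other side, so a dominating set with a vertices on side 1 and b on side 2 satisfies
  m \<le> a + 3b and m \<le> b + 3a. Hence \<gamma> \<ge> m/2, and if m = 2 (mod 4), equality would force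
  a = b with a + b = m/2 odd, so \<gamma> \<ge> m/2 + 1. Deleting a vertex weakens one of the two
  inequalities by one, which still gives \<gamma>(G - u) \<ge> \<lceil>m/2\<rceil>.

  Conversely, dominating sets built from residues mod 4 (essentially the vertices (1, 4i) and
  (2, 4i + 2), a perfect code when 4 divides m) give \<gamma> \<le> \<lceil>m/2\<rceil> for m \<noteq> 2 (mod 4), so
  then W_{3,n} is not critical, and \<gamma>(G - u) \<le> m/2 for m = 2 (mod 4). The rotations
  (i, j) \<mapsto> (i, j + t) and the flip (i, j) \<mapsto> (3 - i, -j) are automorphisms of every W_{\<Delta>,n}
  and act transitively on the vertices, so only u = (1, 0) has to be deleted explicitly.
\<close>

section \<open>Domination numbers of finite graphs\<close>

lemma finite_card_dominating_sets:
  assumes "finite V"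
  shows "finite (card ` {D. dominating V adj D})"
proof -
  have "card ` {D. dominating V adj D} \<subseteq> card ` Pow V"
    by (auto simp: dominating_def)
  then show ?thesis
    using assms by (meson finite_Pow_iff finite_imageI finite_subset)
qed

lemma domination_number_le_card:
  assumes "finite V" and "dominating V adj D"
  shows "domination_number V adj \<le> card D"
  unfolding domination_number_def
  using finite_card_dominating_sets[OF assms(1)] assms(2) by simp

lemma domination_number_attained:
  assumes "finite V"
  obtains D where "dominating V adj D" and "card D = domination_number V adj"
proof -
  have "dominating V adj V"
    by (simp add: dominating_def)
  then have "domination_number V adj \<in> card ` {D. dominating V adj D}"
    unfolding domination_number_def
    using finite_card_dominating_sets[OF assms] by (intro Min_in) auto
  then show ?thesis
    using that by (metis (no_types, lifting) image_iff mem_Collect_eq)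
qed

lemma le_domination_number:
  assumes "finite V" and "\<And>D. dominating V adj D \<Longrightarrow> k \<le> card D"
  shows "k \<le> domination_number V adj"
  using domination_number_attained[OF assms(1)] assms(2) by metis

lemma dominating_image:
  assumes "\<And>x y. x \<in> V \<Longrightarrow> y \<in> V \<Longrightarrow> adj x y \<Longrightarrow> adj' (f x) (f y)"
    and "dominating V adj D"
  shows "dominating (f ` V) adj' (f ` D)"
  unfolding dominating_def
proof (intro conjI ballI)
  show "f ` D \<subseteq> f ` V"
    using assms(2) by (auto simp: dominating_def)
next
  fix w assume "w \<in> f ` V - f ` D"
  then obtain v where v: "v \<in> V - D" "w = f v"
    by blast
  then obtain d where "d \<in> D" "adj v d"
    using assms(2) by (auto simp: dominating_def)
  then show "\<exists>d\<in>f ` D. adj' w d"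
    using assms v by (auto simp: dominating_def)
qed

lemma domination_number_delete_image_le:
  assumes "finite V" and "bij_betw f V V"
    and "\<And>x y. x \<in> V \<Longrightarrow> y \<in> V \<Longrightarrow> adj x y \<Longrightarrow> adj (f x) (f y)"
    and "u \<in> V"
  shows "domination_number (V - {f u}) adj \<le> domination_number (V - {u}) adj"
proof -
  obtain D where D: "dominating (V - {u}) adj D" "card D = domination_number (V - {u}) adj"
    using domination_number_attained[of "V - {u}"] assms(1) by blast
  have "f ` (V - {u}) = f ` V - f ` {u}"
    using assms(2,4) by (intro inj_on_image_set_diff) (auto simp: bij_betw_def)
  then have "f ` (V - {u}) = V - {f u}"
    using assms(2) by (simp add: bij_betw_def)
  then have "dominating (V - {f u}) adj (f ` D)"
    using dominating_image[OF _ D(1), of adj f] assms(3) by auto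
  then have "domination_number (V - {f u}) adj \<le> card (f ` D)"
    using assms(1) by (intro domination_number_le_card) auto
  also have "\<dots> \<le> card D"
    using D(1) assms(1) by (intro card_image_le) (auto simp: dominating_def finite_subset)
  finally show ?thesis
    using D(2) by simp
qed

section \<open>Adjacency and automorphisms of Kn\<ouml>del graphs\<close>

lemma finite_knoedel_vertices [simp]: "finite (knoedel_vertices n)"
  by (simp add: knoedel_vertices_def)

lemma knoedel_adj_sym: "knoedel_adj \<Delta> n x y \<longleftrightarrow> knoedel_adj \<Delta> n y x"
  unfolding knoedel_adj_def by blast

lemma knoedel_adj_12_iff:
  "knoedel_adj \<Delta> n (1, j) (2, l) \<longleftrightarrow> j < n div 2 \<and> (\<exists>k<\<Delta>. l = (j + (2^k - 1)) mod (n div 2))"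
  unfolding knoedel_adj_def by (auto simp: add_diff_assoc)

lemma knoedel_adj_cases:
  assumes "knoedel_adj \<Delta> n x y"
  obtains j l where "x = (1, j)" "y = (2, l)" "knoedel_adj \<Delta> n (1, j) (2, l)"
    | j l where "x = (2, l)" "y = (1, j)" "knoedel_adj \<Delta> n (1, j) (2, l)"
proof -
  obtain j l k where jl: "k < \<Delta>" "j < n div 2" "l = (j + 2^k - 1) mod (n div 2)"
      "x = (1, j) \<and> y = (2, l) \<or> x = (2, l) \<and> y = (1, j)"
    using assms unfolding knoedel_adj_def by blast
  then have "knoedel_adj \<Delta> n (1, j) (2, l)"
    unfolding knoedel_adj_def by blast
  with jl(4) that show ?thesis
    by blast
qed

lemma knoedel_adj_imp_vertices:
  assumes "knoedel_adj \<Delta> n x y"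
  shows "x \<in> knoedel_vertices n \<and> y \<in> knoedel_vertices n"
  using assms
proof (cases rule: knoedel_adj_cases)
  case (1 j l)
  then show ?thesis
    using knoedel_adj_12_iff[of \<Delta> n j l] by (auto simp: knoedel_vertices_def)
next
  case (2 j l)
  then show ?thesis
    using knoedel_adj_12_iff[of \<Delta> n j l] by (auto simp: knoedel_vertices_def)
qed

lemma finite_knoedel_neighbours: "finite {v. knoedel_adj \<Delta> n v x}"
  by (rule finite_subset[of _ "knoedel_vertices n"]) (use knoedel_adj_imp_vertices in blast, simp)

lemma knoedel_adj_fst_neq: "knoedel_adj \<Delta> n x y \<Longrightarrow> fst x \<noteq> fst y"
  by (erule knoedel_adj_cases) auto

lemma knoedel_adj_map:
  assumes "\<And>j l. knoedel_adj \<Delta> n (1, j) (2, l) \<Longrightarrow> knoedel_adj \<Delta> n (f (1, j)) (f (2, l))"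
    and "knoedel_adj \<Delta> n x y"
  shows "knoedel_adj \<Delta> n (f x) (f y)"
  using assms(2)
proof (cases rule: knoedel_adj_cases)
  case (1 j l)
  then show ?thesis
    using assms(1) by simp
next
  case (2 j l)
  then show ?thesis
    using assms(1) knoedel_adj_sym by simp
qed

definition knoedel_rotate :: "nat \<Rightarrow> nat \<Rightarrow> nat \<times> nat \<Rightarrow> nat \<times> nat" where
  "knoedel_rotate n t v = (fst v, (snd v + t) mod (n div 2))"

definition knoedel_flip :: "nat \<Rightarrow> nat \<times> nat \<Rightarrow> nat \<times> nat" where
  "knoedel_flip n v = (3 - fst v, (n div 2 - snd v) mod (n div 2))"

lemma knoedel_adj_rotate:
  assumes "knoedel_adj \<Delta> n x y"
  shows "knoedel_adj \<Delta> n (knoedel_rotate n t x) (knoedel_rotate n t y)"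
proof (rule knoedel_adj_map[OF _ assms])
  fix j l assume "knoedel_adj \<Delta> n (1, j) (2, l)"
  then obtain k where k: "k < \<Delta>" "j < n div 2" "l = (j + (2^k - 1)) mod (n div 2)"
    unfolding knoedel_adj_12_iff by blast
  define c :: nat where "c = 2^k - 1"
  have "(l + t) mod (n div 2) = ((j + t) mod (n div 2) + c) mod (n div 2)"
    using k(3)[folded c_def] by (simp add: mod_simps ac_simps)
  then have "knoedel_adj \<Delta> n (1, (j + t) mod (n div 2)) (2, (l + t) mod (n div 2))"
    unfolding knoedel_adj_12_iff c_def using k(1,2) by auto
  then show "knoedel_adj \<Delta> n (knoedel_rotate n t (1, j)) (knoedel_rotate n t (2, l))"
    by (simp add: knoedel_rotate_def)
qed

lemma knoedel_adj_flip:
  assumes "knoedel_adj \<Delta> n x y"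
  shows "knoedel_adj \<Delta> n (knoedel_flip n x) (knoedel_flip n y)"
proof (rule knoedel_adj_map[OF _ assms])
  fix j l assume "knoedel_adj \<Delta> n (1, j) (2, l)"
  then obtain k where k: "k < \<Delta>" "j < n div 2" "l = (j + (2^k - 1)) mod (n div 2)"
    unfolding knoedel_adj_12_iff by blast
  define m where "m = n div 2"
  define c :: nat where "c = 2^k - 1"
  have l: "l < m" "(j + c) mod m = l"
    using k by (auto simp: m_def c_def)
  have "(m - l + c + j) mod m = (m - l + l) mod m"
    by (metis l(2) add.assoc add.commute mod_add_right_eq)
  also have "\<dots> = (m - j + j) mod m"
    using k(2) l(1) by (simp add: m_def)
  finally have "[m - l + c = m - j] (mod m)"
    by (simp add: cong_def[symmetric] cong_add_rcancel_nat)
  then have "(m - j) mod m = ((m - l) mod m + c) mod m"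
    by (simp add: cong_def mod_simps)
  then have "knoedel_adj \<Delta> n (1, (m - l) mod m) (2, (m - j) mod m)"
    unfolding knoedel_adj_12_iff using k(1,2) by (auto simp: m_def c_def)
  moreover have "knoedel_flip n (1, j) = (2, (m - j) mod m)" "knoedel_flip n (2, l) = (1, (m - l) mod m)"
    by (simp_all add: knoedel_flip_def m_def)
  ultimately show "knoedel_adj \<Delta> n (knoedel_flip n (1, j)) (knoedel_flip n (2, l))"
    by (simp add: knoedel_adj_sym)
qed

lemma bij_knoedel_rotate:
  "bij_betw (knoedel_rotate n t) (knoedel_vertices n) (knoedel_vertices n)"
proof -
  have maps: "knoedel_rotate n t ` knoedel_vertices n \<subseteq> knoedel_vertices n"
    by (auto simp: knoedel_rotate_def knoedel_vertices_def)
  have "inj_on (knoedel_rotate n t) (knoedel_vertices n)"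
  proof (rule inj_onI)
    fix v w
    assume "v \<in> knoedel_vertices n" "w \<in> knoedel_vertices n"
      and "knoedel_rotate n t v = knoedel_rotate n t w"
    then have "fst v = fst w" "[snd v = snd w] (mod n div 2)" "snd v < n div 2" "snd w < n div 2"
      by (auto simp: knoedel_rotate_def knoedel_vertices_def cong_def[symmetric] cong_add_rcancel_nat)
    then show "v = w"
      by (simp add: cong_less_modulus_unique_nat prod_eq_iff)
  qed
  with maps show ?thesis
    by (simp add: bij_betw_def endo_inj_surj)
qed

lemma knoedel_flip_flip:
  "v \<in> knoedel_vertices n \<Longrightarrow> knoedel_flip n (knoedel_flip n v) = v"
  by (cases "snd v = 0") (auto simp: knoedel_flip_def knoedel_vertices_def)

lemma bij_knoedel_flip: "bij_betw (knoedel_flip n) (knoedel_vertices n) (knoedel_vertices n)"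
proof -
  have "knoedel_flip n ` knoedel_vertices n \<subseteq> knoedel_vertices n"
    by (auto simp: knoedel_flip_def knoedel_vertices_def)
  then show ?thesis
    by (intro bij_betw_byWitness[where f' = "knoedel_flip n"]) (simp_all add: knoedel_flip_flip)
qed

lemma knoedel_domination_number_delete_le:
  assumes "u \<in> knoedel_vertices n"
  shows "domination_number (knoedel_vertices n - {u}) (knoedel_adj \<Delta> n)
    \<le> domination_number (knoedel_vertices n - {(1, 0)}) (knoedel_adj \<Delta> n)"
proof -
  obtain i t where u: "u = (i, t)" "i = 1 \<or> i = 2" "t < n div 2"
    using assms by (auto simp: knoedel_vertices_def)
  have "domination_number (knoedel_vertices n - {knoedel_rotate n t (i, 0)}) (knoedel_adj \<Delta> n)
      \<le> domination_number (knoedel_vertices n - {(i, 0)}) (knoedel_adj \<Delta> n)"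
    using u by (intro domination_number_delete_image_le bij_knoedel_rotate knoedel_adj_rotate)
      (auto simp: knoedel_vertices_def)
  moreover have "knoedel_rotate n t (i, 0) = u"
    using u by (simp add: knoedel_rotate_def)
  moreover have "domination_number (knoedel_vertices n - {knoedel_flip n (1, 0)}) (knoedel_adj \<Delta> n)
      \<le> domination_number (knoedel_vertices n - {(1, 0)}) (knoedel_adj \<Delta> n)"
    using u by (intro domination_number_delete_image_le bij_knoedel_flip knoedel_adj_flip)
      (auto simp: knoedel_vertices_def)
  moreover have "knoedel_flip n (1, 0) = (2, 0)"
    by (simp add: knoedel_flip_def)
  ultimately show ?thesis
    using u(2) by auto
qed

lemma card_knoedel_neighbours_le_side_1:
  assumes "fst x \<noteq> 2"
  shows "card {v. knoedel_adj \<Delta> n v x} \<le> \<Delta>"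
proof -
  have "{v. knoedel_adj \<Delta> n v x} \<subseteq> (\<lambda>k. (2, (snd x + (2^k - 1)) mod (n div 2))) ` {..<\<Delta>}"
  proof
    fix v assume "v \<in> {v. knoedel_adj \<Delta> n v x}"
    then have "knoedel_adj \<Delta> n v x"
      by simp
    then show "v \<in> (\<lambda>k. (2, (snd x + (2^k - 1)) mod (n div 2))) ` {..<\<Delta>}"
    proof (cases rule: knoedel_adj_cases)
      case (2 j l)
      then obtain k where "k < \<Delta>" "l = (j + (2^k - 1)) mod (n div 2)"
        unfolding knoedel_adj_12_iff by blast
      with 2 show ?thesis
        by (intro image_eqI[of _ _ k]) simp_all
    qed (use assms in simp)
  qed
  then have "card {v. knoedel_adj \<Delta> n v x}
      \<le> card ((\<lambda>k. (2::nat, (snd x + (2^k - 1)) mod (n div 2))) ` {..<\<Delta>})"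
    by (intro card_mono) auto
  also have "\<dots> \<le> \<Delta>"
    using card_image_le[of "{..<\<Delta>}"] by fastforce
  finally show ?thesis .
qed

lemma card_knoedel_neighbours_le: "card {v. knoedel_adj \<Delta> n v x} \<le> \<Delta>"
proof (cases "fst x = 2")
  case True
  have "{v. knoedel_adj \<Delta> n v x} \<subseteq> knoedel_flip n ` {v. knoedel_adj \<Delta> n v (knoedel_flip n x)}"
  proof
    fix v assume "v \<in> {v. knoedel_adj \<Delta> n v x}"
    then have "knoedel_adj \<Delta> n (knoedel_flip n v) (knoedel_flip n x)" "v \<in> knoedel_vertices n"
      using knoedel_adj_flip knoedel_adj_imp_vertices by auto
    then show "v \<in> knoedel_flip n ` {v. knoedel_adj \<Delta> n v (knoedel_flip n x)}"
      by (metis (mono_tags) image_eqI knoedel_flip_flip mem_Collect_eq)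
  qed
  then have "card {v. knoedel_adj \<Delta> n v x}
      \<le> card (knoedel_flip n ` {v. knoedel_adj \<Delta> n v (knoedel_flip n x)})"
    by (intro card_mono finite_imageI finite_knoedel_neighbours)
  also have "\<dots> \<le> card {v. knoedel_adj \<Delta> n v (knoedel_flip n x)}"
    by (rule card_image_le[OF finite_knoedel_neighbours])
  also have "\<dots> \<le> \<Delta>"
    using True by (intro card_knoedel_neighbours_le_side_1) (simp add: knoedel_flip_def)
  finally show ?thesis .
qed (rule card_knoedel_neighbours_le_side_1)

section \<open>Lower bounds by counting\<close>

lemma knoedel_side_count:
  assumes "finite W" and "dominating W (knoedel_adj \<Delta> n) D"
  shows "card {w \<in> W. fst w = i} \<le> card {d \<in> D. fst d = i} + \<Delta> * card {d \<in> D. fst d \<noteq> i}"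
proof -
  define N where "N d = {v. fst v = i \<and> (v = d \<or> knoedel_adj \<Delta> n v d)}" for d
  have D: "finite D"
    using assms by (auto simp: dominating_def finite_subset)
  have N_finite: "finite (N d)" for d
  proof (rule finite_subset)
    show "N d \<subseteq> insert d (knoedel_vertices n)"
      unfolding N_def using knoedel_adj_imp_vertices by blast
  qed simp
  have N_card: "card (N d) \<le> (if fst d = i then 1 else \<Delta>)" for d
  proof (cases "fst d = i")
    case True
    then have "N d \<subseteq> {d}"
      using knoedel_adj_fst_neq by (fastforce simp: N_def)
    then show ?thesis
      using True card_mono[of "{d}" "N d"] by simp
  next
    case False
    then have "N d \<subseteq> {v. knoedel_adj \<Delta> n v d}"
      by (auto simp: N_def)
    then have "card (N d) \<le> card {v. knoedel_adj \<Delta> n v d}"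
      by (intro card_mono finite_knoedel_neighbours)
    also have "\<dots> \<le> \<Delta>"
      by (rule card_knoedel_neighbours_le)
    finally show ?thesis
      using False by simp
  qed
  have "{w \<in> W. fst w = i} \<subseteq> (\<Union>d\<in>D. N d)"
    using assms(2) by (force simp: dominating_def N_def)
  then have "card {w \<in> W. fst w = i} \<le> card (\<Union>d\<in>D. N d)"
    using D N_finite by (intro card_mono) auto
  also have "\<dots> \<le> (\<Sum>d\<in>D. card (N d))"
    by (rule card_UN_le[OF D])
  also have "\<dots> \<le> (\<Sum>d\<in>D. if fst d = i then 1 else \<Delta>)"
    by (rule sum_mono) (rule N_card)
  also have "\<dots> = card {d \<in> D. fst d = i} + \<Delta> * card {d \<in> D. fst d \<noteq> i}"
    using D by (simp add: sum.If_cases Int_def conj_commute)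
  finally show ?thesis .
qed

lemma knoedel_dominating_side_bounds:
  assumes "dominating W (knoedel_adj \<Delta> n) D" and "W \<subseteq> knoedel_vertices n"
  obtains a b where "card D = a + b"
    and "card {w \<in> W. fst w = 1} \<le> a + \<Delta> * b" and "card {w \<in> W. fst w = 2} \<le> b + \<Delta> * a"
proof
  have D: "D \<subseteq> knoedel_vertices n" "finite W"
    using assms finite_subset[OF assms(2)] by (auto simp: dominating_def)
  then have sides: "{d \<in> D. fst d \<noteq> 1} = {d \<in> D. fst d = 2}" "{d \<in> D. fst d \<noteq> 2} = {d \<in> D. fst d = 1}"
    by (auto simp: knoedel_vertices_def)
  show "card {w \<in> W. fst w = 1} \<le> card {d \<in> D. fst d = 1} + \<Delta> * card {d \<in> D. fst d = 2}"
    using knoedel_side_count[OF D(2) assms(1), of 1] sides by simp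
  show "card {w \<in> W. fst w = 2} \<le> card {d \<in> D. fst d = 2} + \<Delta> * card {d \<in> D. fst d = 1}"
    using knoedel_side_count[OF D(2) assms(1), of 2] sides by simp
  have "card D = card ({d \<in> D. fst d = 1} \<union> {d \<in> D. fst d = 2})"
    by (rule arg_cong[where f = card]) (use D in \<open>auto simp: knoedel_vertices_def\<close>)
  also have "\<dots> = card {d \<in> D. fst d = 1} + card {d \<in> D. fst d = 2}"
    using D finite_subset[OF D(1)] by (intro card_Un_disjoint) auto
  finally show "card D = card {d \<in> D. fst d = 1} + card {d \<in> D. fst d = 2}" .
qed

lemma card_knoedel_side:
  assumes "i = 1 \<or> i = 2"
  shows "card {w \<in> knoedel_vertices n. fst w = i} = n div 2"
proof -
  have "{w \<in> knoedel_vertices n. fst w = i} = Pair i ` {0..<n div 2}"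
    using assms by (auto simp: knoedel_vertices_def)
  then show ?thesis
    by (simp add: card_image inj_on_def)
qed

lemma knoedel3_domination_number_ge:
  assumes "(n div 2) mod 4 = 2"
  shows "n div 2 div 2 + 1 \<le> domination_number (knoedel_vertices n) (knoedel_adj 3 n)"
proof (rule le_domination_number[OF finite_knoedel_vertices])
  fix D assume "dominating (knoedel_vertices n) (knoedel_adj 3 n) D"
  then obtain a b where "card D = a + b" "card {w \<in> knoedel_vertices n. fst w = 1} \<le> a + 3 * b"
    "card {w \<in> knoedel_vertices n. fst w = 2} \<le> b + 3 * a"
    by (rule knoedel_dominating_side_bounds) simp
  then have ab: "card D = a + b" "n div 2 \<le> a + 3 * b" "n div 2 \<le> b + 3 * a"
    by (simp_all add: card_knoedel_side)
  obtain q where m: "n div 2 = 4 * q + 2"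
    using assms by (metis mult.commute div_mult_mod_eq)
  have "a + b \<noteq> 2 * q + 1"
  proof
    assume "a + b = 2 * q + 1"
    then have "a = b" "a + b = 2 * q + 1"
      using ab unfolding m by linarith+
    then show False
      by presburger
  qed
  then show "n div 2 div 2 + 1 \<le> card D"
    using ab unfolding m by linarith
qed

lemma knoedel3_domination_number_delete_ge:
  "(n div 2 + 1) div 2 \<le> domination_number (knoedel_vertices n - {(1, 0)}) (knoedel_adj 3 n)"
proof (rule le_domination_number)
  fix D assume D: "dominating (knoedel_vertices n - {(1, 0)}) (knoedel_adj 3 n) D"
  obtain a b where ab0: "card D = a + b"
    "card {w \<in> knoedel_vertices n - {(1, 0)}. fst w = 1} \<le> a + 3 * b"
    "card {w \<in> knoedel_vertices n - {(1, 0)}. fst w = 2} \<le> b + 3 * a"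
    by (rule knoedel_dominating_side_bounds[OF D]) auto
  have "(1, 0) \<in> {w \<in> knoedel_vertices n. fst w = 1} \<longleftrightarrow> 0 < n div 2"
    by (auto simp: knoedel_vertices_def)
  then have "card ({w \<in> knoedel_vertices n. fst w = 1} - {(1, 0)}) = n div 2 - 1"
    by (simp add: card_Diff_singleton_if card_knoedel_side)
  moreover have "{w \<in> knoedel_vertices n - {(1, 0)}. fst w = 1} = {w \<in> knoedel_vertices n. fst w = 1} - {(1, 0)}"
    "{w \<in> knoedel_vertices n - {(1, 0)}. fst w = 2} = {w \<in> knoedel_vertices n. fst w = 2}"
    by auto
  ultimately have "card {w \<in> knoedel_vertices n - {(1, 0)}. fst w = 1} = n div 2 - 1"
    "card {w \<in> knoedel_vertices n - {(1, 0)}. fst w = 2} = n div 2"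
    using card_knoedel_side[of 2 n] by (simp_all only:) simp
  with ab0 have ab: "card D = a + b" "n div 2 - 1 \<le> a + 3 * b" "n div 2 \<le> b + 3 * a"
    by simp_all
  have "2 * (n div 2) \<le> 4 * card D + 1"
    using ab by (cases "n div 2") auto
  then show "(n div 2 + 1) div 2 \<le> card D"
    by presburger
qed simp

section \<open>Dominating sets of W_{3,n}\<close>

text \<open>For j, l < m this says l = (j + c) mod m with c \<in> {0, 1, 3} = {2^k - 1 | k < 3}, i.e. that
  (1, j) and (2, l) are adjacent in W_{3,2m}.\<close>

definition knoedel3_edge :: "nat \<Rightarrow> nat \<Rightarrow> nat \<Rightarrow> bool" where
  "knoedel3_edge m j l \<longleftrightarrow> (\<exists>c\<in>{0, 1, 3}. j + c = l \<or> j + c = l + m)"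

lemma knoedel_adj_3I:
  assumes "j < n div 2" and "l < n div 2" and "knoedel3_edge (n div 2) j l"
  shows "knoedel_adj 3 n (1, j) (2, l)"
proof -
  obtain c where c: "c \<in> {0, 1, 3}" "j + c = l \<or> j + c = l + n div 2"
    using assms(3) unfolding knoedel3_edge_def by blast
  then have "(j + c) mod (n div 2) = l"
    using assms(2) by auto
  moreover have "\<exists>k<3. c = 2^k - 1"
    using c(1) by (force intro: exI[of _ 0] exI[of _ 1] exI[of _ 2])
  ultimately show ?thesis
    using assms(1) unfolding knoedel_adj_12_iff by metis
qed

lemma knoedel3_domination_number_leI:
  fixes A B :: "nat set"
  assumes m: "n div 2 = m"
    and "A \<subseteq> {..<m}" and "B \<subseteq> {..<m}"
    and "\<And>j. j \<in> A \<Longrightarrow> (1, j) \<notin> X" and "\<And>l. l \<in> B \<Longrightarrow> (2, l) \<notin> X"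
    and side_1: "\<And>j. j < m \<Longrightarrow> (1, j) \<notin> X \<Longrightarrow> j \<notin> A \<Longrightarrow> \<exists>l\<in>B. knoedel3_edge m j l"
    and side_2: "\<And>l. l < m \<Longrightarrow> (2, l) \<notin> X \<Longrightarrow> l \<notin> B \<Longrightarrow> \<exists>j\<in>A. knoedel3_edge m j l"
  shows "domination_number (knoedel_vertices n - X) (knoedel_adj 3 n) \<le> card A + card B"
proof -
  let ?D = "Pair (1::nat) ` A \<union> Pair (2::nat) ` B"
  have "dominating (knoedel_vertices n - X) (knoedel_adj 3 n) ?D"
    unfolding dominating_def
  proof (intro conjI ballI)
    show "?D \<subseteq> knoedel_vertices n - X"
      unfolding knoedel_vertices_def m using assms(2-5) by auto
  next
    fix v assume v: "v \<in> knoedel_vertices n - X - ?D"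
    then obtain i j where ij: "v = (i, j)" "i = 1 \<or> i = 2" "j < m"
      unfolding knoedel_vertices_def m by auto
    from ij(2) show "\<exists>d\<in>?D. knoedel_adj 3 n v d"
    proof
      assume "i = 1"
      then obtain l where l: "l \<in> B" "knoedel3_edge m j l"
        using side_1 v ij by blast
      then have "knoedel_adj 3 n v (2, l)"
        using knoedel_adj_3I[of j n l] \<open>i = 1\<close> ij l assms(3) unfolding m by auto
      then show ?thesis
        using l(1) by blast
    next
      assume "i = 2"
      then obtain j' where j': "j' \<in> A" "knoedel3_edge m j' j"
        using side_2 v ij by blast
      then have "knoedel_adj 3 n (1, j') v"
        using knoedel_adj_3I[of j' n j] \<open>i = 2\<close> ij j' assms(2) unfolding m by auto
      then show ?thesis
        using j'(1) knoedel_adj_sym by blast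
    qed
  qed
  then have "domination_number (knoedel_vertices n - X) (knoedel_adj 3 n) \<le> card ?D"
    by (intro domination_number_le_card) simp_all
  also have "\<dots> \<le> card (Pair (1::nat) ` A) + card (Pair (2::nat) ` B)"
    by (rule card_Un_le)
  also have "\<dots> \<le> card A + card B"
    using assms(2,3) by (intro add_mono card_image_le) (auto intro: finite_subset)
  finally show ?thesis .
qed

lemma card_residue_class_le:
  fixes B d K r :: nat
  assumes "B \<le> d * K + r"
  shows "card {j. j < B \<and> j mod d = r} \<le> K"
proof -
  have "{j. j < B \<and> j mod d = r} \<subseteq> (\<lambda>i. d * i + r) ` {..<K}"
  proof
    fix j assume "j \<in> {j. j < B \<and> j mod d = r}"
    then have "j = d * (j div d) + r" "j < d * K + r"
      using assms mult_div_mod_eq[of d j] by auto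
    then have j: "j = d * (j div d) + r" "d * (j div d) + r < d * K + r"
      by simp_all
    then have "j div d < K"
      by (metis add_less_cancel_right mult_less_cancel1)
    with j(1) show "j \<in> (\<lambda>i. d * i + r) ` {..<K}"
      by blast
  qed
  then have "card {j. j < B \<and> j mod d = r} \<le> card ((\<lambda>i. d * i + r) ` {..<K})"
    by (intro card_mono) simp_all
  also have "\<dots> \<le> K"
    using card_image_le[of "{..<K}" "\<lambda>i. d * i + r"] by simp
  finally show ?thesis .
qed

lemma nat_4_cases:
  fixes x :: nat
  obtains i where "x = 4 * i" | i where "x = 4 * i + 1" | i where "x = 4 * i + 2"
    | i where "x = 4 * i + 3"
proof -
  have "x mod 4 = 0 \<or> x mod 4 = 1 \<or> x mod 4 = 2 \<or> x mod 4 = 3"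
    by arith
  then show thesis
    using that div_mult_mod_eq[of x 4] by (metis add.right_neutral mult.commute)
qed

text \<open>The perfect code {(1, 4i)} \<union> {(2, 4i + 2)} of the case 4 | m also works for m = 4q + 3.\<close>

lemma knoedel3_domination_number_le_mod4_0_3:
  assumes "(n div 2) mod 4 = 0 \<or> (n div 2) mod 4 = 3"
  shows "domination_number (knoedel_vertices n) (knoedel_adj 3 n) \<le> (n div 2 + 1) div 2"
proof -
  define m where "m = n div 2"
  obtain q where q: "m = 4 * q \<or> m = 4 * q + 3"
    using assms unfolding m_def by (metis add_0_right div_mult_mod_eq mult.commute)
  define A where "A = {j. j < m \<and> j mod 4 = 0}"
  define B where "B = {l. l < m \<and> l mod 4 = 2}"
  have "card A \<le> (m + 3) div 4" "card B \<le> (m + 1) div 4"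
    unfolding A_def B_def using q by (intro card_residue_class_le; auto)+
  moreover have "(m + 3) div 4 + (m + 1) div 4 = (m + 1) div 2"
    using q by auto
  moreover have "domination_number (knoedel_vertices n - {}) (knoedel_adj 3 n) \<le> card A + card B"
  proof (rule knoedel3_domination_number_leI[OF m_def[symmetric]])
    fix j assume j: "j < m" "j \<notin> A"
    show "\<exists>l\<in>B. knoedel3_edge m j l"
    proof (cases rule: nat_4_cases[of j])
      case (1 i)
      with j have False
        by (simp add: A_def)
      then show ?thesis ..
    next
      case (2 i)
      with j q show ?thesis
        by (intro bexI[of _ "j + 1"]; simp add: B_def knoedel3_edge_def; presburger)
    next
      case (3 i)
      with j show ?thesis
        by (intro bexI[of _ j]; simp add: B_def knoedel3_edge_def; presburger)
    next
      case (4 i)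
      show ?thesis
      proof (cases "j + 3 < m")
        case True
        with 4 show ?thesis
          by (intro bexI[of _ "j + 3"]; simp add: B_def knoedel3_edge_def; presburger)
      next
        case False
        with 4 j q show ?thesis
          by (intro bexI[of _ 2]; simp add: B_def knoedel3_edge_def; presburger)
      qed
    qed
  next
    fix l assume l: "l < m" "l \<notin> B"
    show "\<exists>j\<in>A. knoedel3_edge m j l"
    proof (cases rule: nat_4_cases[of l])
      case (1 i)
      with l show ?thesis
        by (intro bexI[of _ l]; simp add: A_def knoedel3_edge_def; presburger)
    next
      case (2 i)
      with l show ?thesis
        by (intro bexI[of _ "4 * i"]; simp add: A_def knoedel3_edge_def; presburger)
    next
      case (3 i)
      with l have False
        by (simp add: B_def) presburger
      then show ?thesis ..
    next
      case (4 i)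
      with l show ?thesis
        by (intro bexI[of _ "4 * i"]; simp add: A_def knoedel3_edge_def; presburger)
    qed
  qed (auto simp: A_def B_def)
  ultimately show ?thesis
    by (simp add: m_def)
qed

text \<open>For m = 4q + 1 the vertex (1, 4q) of that pattern is replaced by (2, 4q).\<close>

lemma knoedel3_domination_number_le_mod4_1:
  assumes "(n div 2) mod 4 = 1"
  shows "domination_number (knoedel_vertices n) (knoedel_adj 3 n) \<le> (n div 2 + 1) div 2"
proof -
  define m where "m = n div 2"
  obtain q where q: "m = 4 * q + 1"
    using assms unfolding m_def by (metis div_mult_mod_eq mult.commute)
  define A where "A = {j. j < 4 * q \<and> j mod 4 = 0}"
  define B where "B = insert (4 * q) {l. l < m \<and> l mod 4 = 2}"
  have "card A \<le> q"
    unfolding A_def by (rule card_residue_class_le) simp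
  moreover have "card {l. l < m \<and> l mod 4 = 2} \<le> q"
    unfolding q by (rule card_residue_class_le) simp
  then have "card B \<le> q + 1"
    unfolding B_def by (simp add: card_insert_if)
  moreover have "domination_number (knoedel_vertices n - {}) (knoedel_adj 3 n) \<le> card A + card B"
  proof (rule knoedel3_domination_number_leI[OF m_def[symmetric]])
    fix j assume j: "j < m" "j \<notin> A"
    show "\<exists>l\<in>B. knoedel3_edge m j l"
    proof (cases rule: nat_4_cases[of j])
      case (1 i)
      with j q have "j = 4 * q"
        by (simp add: A_def)
      then show ?thesis
        by (intro bexI[of _ j]; simp add: B_def knoedel3_edge_def)
    next
      case (2 i)
      with j q show ?thesis
        by (intro bexI[of _ "j + 1"]; simp add: B_def knoedel3_edge_def; presburger)
    next
      case (3 i)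
      with j show ?thesis
        by (intro bexI[of _ j]; simp add: B_def knoedel3_edge_def; presburger)
    next
      case (4 i)
      show ?thesis
      proof (cases "j + 3 < m")
        case True
        with 4 show ?thesis
          by (intro bexI[of _ "j + 3"]; simp add: B_def knoedel3_edge_def; presburger)
      next
        case False
        with 4 j q show ?thesis
          by (intro bexI[of _ "j + 1"]; simp add: B_def knoedel3_edge_def; presburger)
      qed
    qed
  next
    fix l assume l: "l < m" "l \<notin> B"
    show "\<exists>j\<in>A. knoedel3_edge m j l"
    proof (cases rule: nat_4_cases[of l])
      case (1 i)
      with l q show ?thesis
        by (intro bexI[of _ l]; simp add: A_def B_def knoedel3_edge_def; presburger)
    next
      case (2 i)
      with l q show ?thesis
        by (intro bexI[of _ "4 * i"]; simp add: A_def knoedel3_edge_def; presburger)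
    next
      case (3 i)
      with l have False
        by (simp add: B_def) presburger
      then show ?thesis ..
    next
      case (4 i)
      with l q show ?thesis
        by (intro bexI[of _ "4 * i"]; simp add: A_def knoedel3_edge_def; presburger)
    qed
  qed (auto simp: A_def B_def q)
  ultimately show ?thesis
    by (simp add: m_def[symmetric] q)
qed

text \<open>The pattern shifted by three, with (1, 1) added and (2, 1) removed; the deleted vertex
  (1, 0) needs no dominator.\<close>

lemma knoedel3_domination_number_delete_le_mod4_2:
  assumes "(n div 2) mod 4 = 2" and "4 \<le> n div 2"
  shows "domination_number (knoedel_vertices n - {(1, 0)}) (knoedel_adj 3 n) \<le> n div 2 div 2"
proof -
  define m where "m = n div 2"
  obtain q where q: "m = 4 * q + 2"
    using assms(1) unfolding m_def by (metis div_mult_mod_eq mult.commute)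
  with assms(2) have "0 < q"
    by (simp add: m_def)
  then obtain p where p: "q = Suc p"
    using gr0_conv_Suc by blast
  define A where "A = insert 1 {j. j < m \<and> j mod 4 = 3}"
  define B where "B = {l. l < m \<and> l mod 4 = 1} - {1}"
  have "card {j. j < m \<and> j mod 4 = 3} \<le> q"
    unfolding q by (rule card_residue_class_le) simp
  then have "card A \<le> q + 1"
    unfolding A_def by (simp add: card_insert_if)
  moreover have "card {l. l < m \<and> l mod 4 = 1} \<le> q + 1"
    unfolding q by (rule card_residue_class_le) simp
  then have "card B \<le> q"
    unfolding B_def using q by (simp add: card_Diff_singleton_if)
  moreover have "domination_number (knoedel_vertices n - {(1, 0)}) (knoedel_adj 3 n) \<le> card A + card B"
  proof (rule knoedel3_domination_number_leI[OF m_def[symmetric]])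
    fix j assume j: "j < m" "(1, j) \<notin> {(1, 0)}" "j \<notin> A"
    show "\<exists>l\<in>B. knoedel3_edge m j l"
    proof (cases rule: nat_4_cases[of j])
      case (1 i)
      with j q show ?thesis
        by (intro bexI[of _ "j + 1"]; simp add: B_def knoedel3_edge_def; presburger)
    next
      case (2 i)
      with j show ?thesis
        by (intro bexI[of _ j]; simp add: A_def B_def knoedel3_edge_def; presburger)
    next
      case (3 i)
      with j q show ?thesis
        by (intro bexI[of _ "j + 3"]; simp add: B_def knoedel3_edge_def; presburger)
    next
      case (4 i)
      with j have False
        by (simp add: A_def)
      then show ?thesis ..
    qed
  next
    fix l assume l: "l < m" "l \<notin> B"
    show "\<exists>j\<in>A. knoedel3_edge m j l"
    proof (cases rule: nat_4_cases[of l])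
      case (1 i)
      show ?thesis
      proof (cases i)
        case 0
        with 1 q p show ?thesis
          by (intro bexI[of _ "4 * p + 3"]; simp add: A_def knoedel3_edge_def; presburger)
      next
        case (Suc k)
        with 1 l show ?thesis
          by (intro bexI[of _ "4 * k + 3"]; simp add: A_def knoedel3_edge_def; presburger)
      qed
    next
      case (2 i)
      with l have "l = 1"
        by (simp add: B_def)
      then show ?thesis
        by (intro bexI[of _ 1]; simp add: A_def knoedel3_edge_def)
    next
      case (3 i)
      show ?thesis
      proof (cases i)
        case 0
        with 3 show ?thesis
          by (intro bexI[of _ 1]; simp add: A_def knoedel3_edge_def)
      next
        case (Suc k)
        with 3 l show ?thesis
          by (intro bexI[of _ "4 * k + 3"]; simp add: A_def knoedel3_edge_def; presburger)
      qed
    next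
      case (4 i)
      with l show ?thesis
        by (intro bexI[of _ l]; simp add: A_def knoedel3_edge_def; presburger)
    qed
  qed (auto simp: A_def B_def q)
  ultimately show ?thesis
    by (simp add: m_def[symmetric] q)
qed

lemma knoedel3_domination_number_le_half:
  assumes "(n div 2) mod 4 \<noteq> 2"
  shows "domination_number (knoedel_vertices n) (knoedel_adj 3 n) \<le> (n div 2 + 1) div 2"
proof -
  have "(n div 2) mod 4 = 0 \<or> (n div 2) mod 4 = 3 \<or> (n div 2) mod 4 = 1"
    using assms by arith
  then show ?thesis
    using knoedel3_domination_number_le_mod4_0_3[of n] knoedel3_domination_number_le_mod4_1[of n]
    by (elim disjE) simp_all
qed

theorem theorem3p1:
  fixes n :: nat
  assumes "even n" and "n \<ge> 8"
  shows "gamma_critical (knoedel_vertices n) (knoedel_adj 3 n) \<longleftrightarrow> n mod 8 = 4"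
proof -
  have m: "4 \<le> n div 2"
    using assms(2) by simp
  obtain k where "n = 2 * k"
    using assms(1) by (elim evenE)
  then have mod_8: "n mod 8 = 4 \<longleftrightarrow> (n div 2) mod 4 = 2"
    using mult_mod_right[of 2 k 4] by auto
  show ?thesis
  proof (cases "(n div 2) mod 4 = 2")
    case True
    have "domination_number (knoedel_vertices n - {u}) (knoedel_adj 3 n)
        < domination_number (knoedel_vertices n) (knoedel_adj 3 n)"
      if "u \<in> knoedel_vertices n" for u
      using knoedel_domination_number_delete_le[OF that, of 3]
        knoedel3_domination_number_delete_le_mod4_2[OF True m]
        knoedel3_domination_number_ge[OF True]
      by linarith
    then show ?thesis
      using True mod_8 by (simp add: gamma_critical_def)
  next
    case False
    have "(1, 0) \<in> knoedel_vertices n"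
      using m by (simp add: knoedel_vertices_def)
    then have "\<not> gamma_critical (knoedel_vertices n) (knoedel_adj 3 n)"
      using knoedel3_domination_number_le_half[OF False] knoedel3_domination_number_delete_ge[of n]
      unfolding gamma_critical_def by fastforce
    then show ?thesis
      using False mod_8 by simp
  qed
qed

end
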